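(* Let $[\mathbf{G}]$ be a random field belonging to $\mathcal{C}^{2,S}_n$ and let $[\mathbf{K}_0]$ be the random field in $\mathcal{C}^+_n$ such that $[\mathbf{K}_0(\mathbf{x})]=\mathbb{L}([\mathbf{G}(\mathbf{x})])$ for all $\mathbf{x}\in D$. Then: (i) there exist two real numbers $0<\gamma_0<+\infty$ and $0<\gamma_1<+\infty$ such that for all $\mathbf{x}\in D$, $\|\mathbf{K}_0(\mathbf{x})\|_F\le\gamma_0+\gamma_1\|\mathbf{G}(\mathbf{x})\|_F^2$ almost surely; moreover $E\{\|\mathbf{K}_0(\mathbf{x})\|_F\}<+\infty$, and if $E\{\|\mathbf{G}(\mathbf{x})\|_F^4\}<+\infty$ then $E\{\|\mathbf{K}_0(\mathbf{x})\|_F^2\}<+\infty$; (ii) if $\|\mathbf{G}(\mathbf{x})\|_F\le\beta_G<+\infty$ almost surely for all $\mathbf{x}\in D$, where $\beta_G$ is a positive random variable independent of $\mathbf{x}$, then $\|\mathbf{K}_0(\mathbf{x})\|_F\le\beta_0<+\infty$ almost surely for all $\mathbf{x}\in D$, where $\beta_0=\gamma_0+\gamma_1\beta_G^2$ is a positive random variable independent of $\mathbf{x}$.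
   Context: Let $d,n\ge1$ be integers and $D\subset\mathbb{R}^d$ a bounded open domain. $\mathbb{M}_n^+(\mathbb{R})$ (resp. $\mathbb{M}_n^S(\mathbb{R})$) is the set of symmetric positive-definite (resp. symmetric) real $n\times n$ matrices; $\|\cdot\|_F$ is the Frobenius norm. $\mathcal{C}^+_n$ is the set of random fields on $D$ (on a probability space) with values in $\mathbb{M}_n^+(\mathbb{R})$; $\mathcal{C}^{2,S}_n$ is the set of random fields $[\mathbf{G}]$ on $D$ with values in $\mathbb{M}_n^S(\mathbb{R})$ with $E\{\|\mathbf{G}(\mathbf{x})\|_F^2\}<+\infty$ for all $\mathbf{x}$. For each real $a>0$, let $g\mapsto h(g;a)$ be a function from $\mathbb{R}$ into $\mathbb{R}^+$ such that (i) $h(\cdot;a)$ is strictly monotonically increasing on $\mathbb{R}$, and (ii) there exist reals $0<c_h<+\infty$ and $0<c_a<+\infty$ with $h(g;a)\le c_a+c_h g^2$ for all $g\in\mathbb{R}$. Fix positive reals $a_1,\dots,a_n$. For $[G]\in\mathbb{M}_n^S(\mathbb{R})$, let $\mathcal{L}([G])$ be the upper triangular $n\times n$ real matrix with $[\mathcal{L}([G])]_{jj'}=[G]_{jj'}$ for $1\le j<j'\le n$ and $[\mathcal{L}([G])]_{jj}=\sqrt{h([G]_{jj};a_j)}$ for $1\le j\le n$, and set $\mathbb{L}([G])=\mathcal{L}([G])^T\mathcal{L}([G])$. *)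

theory Defs
  imports "HOL-Probability.Probability"
begin

definition frob :: "real^'n^'m \<Rightarrow> real" where
  "frob A = sqrt (\<Sum>i\<in>UNIV. \<Sum>j\<in>UNIV. (A$i$j)^2)"

text \<open>Indices range over a finite linearly ordered type (standing for 1..n).\<close>
definition calL :: "(real \<Rightarrow> real \<Rightarrow> real) \<Rightarrow> ('n::{finite,linorder} \<Rightarrow> real)
    \<Rightarrow> ((real, 'n) vec, 'n) vec \<Rightarrow> ((real, 'n) vec, 'n) vec" where
  "calL h a G = (\<chi> j j'. if j < j' then G$j$j'
                         else if j = j' then sqrt (h (G$j$j) (a j)) else 0)"

definition bbL :: "(real \<Rightarrow> real \<Rightarrow> real) \<Rightarrow> ('n::{finite,linorder} \<Rightarrow> real)
    \<Rightarrow> ((real, 'n) vec, 'n) vec \<Rightarrow> ((real, 'n) vec, 'n) vec" where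
  "bbL h a G = transpose (calL h a G) ** calL h a G"

end

theory Submission
  imports Defs
begin

text \<open>The Frobenius norm is submultiplicative, so
  \<open>\<parallel>bbL G\<parallel> = \<parallel>(calL G)\<^sup>T calL G\<parallel> \<le> \<parallel>calL G\<parallel>\<^sup>2\<close>. The squared norm of \<open>calL G\<close> is the sum
  of the squared strictly upper entries of \<open>G\<close> and the values \<open>h(G\<^sub>j\<^sub>j; a\<^sub>j) \<le> c\<^sub>a + c\<^sub>h G\<^sub>j\<^sub>j\<^sup>2\<close>,
  hence at most \<open>\<gamma>\<^sub>0 + \<gamma>\<^sub>1 \<parallel>G\<parallel>\<^sup>2\<close>. This pointwise bound gives both integrability claims
  (the probability measure is finite) and, composed with \<open>\<parallel>G\<parallel> \<le> \<beta>\<^sub>G\<close>, part (ii).\<close>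

lemma frob_nonneg: "0 \<le> frob A"
  unfolding frob_def by (simp add: sum_nonneg)

lemma frob_power2: "(frob A)^2 = (\<Sum>i\<in>UNIV. \<Sum>j\<in>UNIV. (A$i$j)^2)"
  unfolding frob_def by (simp add: sum_nonneg)

lemma frob_power2_rows: "(frob A)^2 = (\<Sum>i\<in>UNIV. (norm (A$i))^2)"
  unfolding frob_power2 norm_vec_def L2_set_def real_norm_def by (simp add: sum_nonneg)

lemma frob_transpose [simp]: "frob (transpose A) = frob A"
  unfolding frob_def transpose_def using sum.swap[of "\<lambda>i j. (A$i$j)^2" UNIV UNIV] by simp

lemma frob_matrix_mult_le: "frob (A ** B) \<le> frob A * frob B"
proof (rule power2_le_imp_le)
  have entry: "(A ** B)$i$j = A$i \<bullet> transpose B $ j" for i j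
    by (simp add: matrix_matrix_mult_def transpose_def inner_vec_def)
  have "(frob (A ** B))^2 = (\<Sum>i\<in>UNIV. \<Sum>j\<in>UNIV. (A$i \<bullet> transpose B $ j)^2)"
    by (simp only: frob_power2 entry)
  also have "\<dots> \<le> (\<Sum>i\<in>UNIV. \<Sum>j\<in>UNIV. (norm (A$i))^2 * (norm (transpose B $ j))^2)"
  proof (intro sum_mono)
    fix i j
    have "\<bar>A$i \<bullet> transpose B $ j\<bar> \<le> norm (A$i) * norm (transpose B $ j)"
      by (rule Cauchy_Schwarz_ineq2)
    then show "(A$i \<bullet> transpose B $ j)^2 \<le> (norm (A$i))^2 * (norm (transpose B $ j))^2"
      by (metis abs_ge_zero power2_abs power_mono power_mult_distrib)
  qed
  also have "\<dots> = (frob A)^2 * (frob (transpose B))^2"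
    by (simp only: frob_power2_rows sum_product)
  finally show "(frob (A ** B))^2 \<le> (frob A * frob B)^2"
    by (simp add: power_mult_distrib)
  show "0 \<le> frob A * frob B"
    by (simp add: frob_nonneg)
qed

lemma frob_transpose_mult_self_le: "frob (transpose L ** L) \<le> (frob L)^2"
  using frob_matrix_mult_le[of "transpose L" L] by (simp add: power2_eq_square)

lemma frob_calL_power2_le:
  assumes h_nonneg: "\<And>j g. 0 \<le> h g (a j)"
    and h_le: "\<And>j g. h g (a j) \<le> c j + B * g^2"
    and B: "1 \<le> B"
  shows "(frob (calL h a G))^2 \<le> (\<Sum>j\<in>UNIV. c j) + B * (frob G)^2"
proof -
  have "(calL h a G $ j $ j')^2 \<le> (if j = j' then c j else 0) + B * (G$j$j')^2" for j j'
  proof -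
    consider "j < j'" | "j = j'" | "j' < j" by fastforce
    then show ?thesis
    proof cases
      case 1
      then have "j \<noteq> j'" by simp
      with 1 B show ?thesis by (simp add: calL_def mult_le_cancel_right1)
    next
      case 2
      then show ?thesis using h_nonneg[of "G$j$j" j] h_le[of "G$j$j" j] by (simp add: calL_def)
    next
      case 3
      then have "j \<noteq> j'" and "\<not> j < j'" by auto
      with B show ?thesis by (simp add: calL_def)
    qed
  qed
  then have "(frob (calL h a G))^2
      \<le> (\<Sum>j\<in>UNIV. \<Sum>j'\<in>UNIV. (if j = j' then c j else 0) + B * (G$j$j')^2)"
    unfolding frob_power2 by (intro sum_mono)
  also have "\<dots> = (\<Sum>j\<in>UNIV. c j) + B * (frob G)^2"
    by (simp add: frob_power2 sum.distrib sum_distrib_left)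
  finally show ?thesis .
qed

lemma frob_bbL_le:
  assumes "\<And>j g. 0 \<le> h g (a j)"
    and "\<And>j g. h g (a j) \<le> c j + B * g^2"
    and "1 \<le> B"
  shows "frob (bbL h a G) \<le> (\<Sum>j\<in>UNIV. c j) + B * (frob G)^2"
  unfolding bbL_def
  using frob_transpose_mult_self_le[of "calL h a G"] frob_calL_power2_le[of h a c B G, OF assms] by linarith

lemma finite_quadratic_bounds_uniform:
  fixes f :: "'i::finite \<Rightarrow> real \<Rightarrow> real"
  assumes "\<And>i. \<exists>b c. 0 < b \<and> 0 < c \<and> (\<forall>g. f i g \<le> c + b * g^2)"
  obtains c B where "\<And>i. 0 < c i" and "1 \<le> B" and "\<And>i g. f i g \<le> c i + B * g^2"
proof -
  from assms obtain b c where bc: "\<And>i. 0 < b i \<and> 0 < c i \<and> (\<forall>g. f i g \<le> c i + b i * g^2)"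
    by metis
  define B where "B = max 1 (Max (range b))"
  have "1 \<le> B" and b_le: "b i \<le> B" for i
    unfolding B_def by (simp_all add: max.coboundedI2)
  moreover have "f i g \<le> c i + B * g^2" for i g
  proof -
    have "f i g \<le> c i + b i * g^2"
      using bc by blast
    moreover have "b i * g^2 \<le> B * g^2"
      by (rule mult_right_mono[OF b_le]) simp
    ultimately show ?thesis
      by linarith
  qed
  ultimately show ?thesis
    using bc that by blast
qed

lemma borel_measurable_frob_bbL:
  fixes F :: "'w \<Rightarrow> ((real, 'k::{finite,linorder}) vec, 'k) vec"
  assumes F: "F \<in> borel_measurable M"
    and h: "\<And>j. (\<lambda>g. h g (a j)) \<in> borel_measurable borel"
  shows "(\<lambda>\<omega>. frob (bbL h a (F \<omega>))) \<in> borel_measurable M"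
proof -
  have F_entry: "(\<lambda>\<omega>. F \<omega> $ i $ j) \<in> borel_measurable M" for i j
  proof -
    have "continuous_on UNIV (\<lambda>A :: ((real, 'k) vec, 'k) vec. A $ i $ j)"
      by (intro continuous_intros)
    then show ?thesis
      using measurable_compose[OF F borel_measurable_continuous_onI] by simp
  qed
  have "(\<lambda>\<omega>. calL h a (F \<omega>) $ k $ i) \<in> borel_measurable M" for k i
    using F_entry measurable_compose[OF F_entry h] unfolding calL_def by simp
  then show ?thesis
    unfolding frob_def bbL_def matrix_matrix_mult_def transpose_def by simp
qed

lemma integrable_if_norm_le_affine:
  fixes f :: "'a \<Rightarrow> 'b::{banach,second_countable_topology}"
  assumes "finite_measure M"
    and "f \<in> borel_measurable M"
    and "integrable M u"
    and "AE \<omega> in M. norm (f \<omega>) \<le> c + d * u \<omega>"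
  shows "integrable M f"
proof (rule Bochner_Integration.integrable_bound)
  show "integrable M (\<lambda>\<omega>. c + d * u \<omega>)"
    using assms(1,3) by (simp add: finite_measure.integrable_const)
  show "AE \<omega> in M. norm (f \<omega>) \<le> norm (c + d * u \<omega>)"
    using assms(4) by eventually_elim simp
qed fact

lemma integrable_power2_if_abs_le_affine:
  fixes f u :: "'a \<Rightarrow> real"
  assumes "finite_measure M"
    and "f \<in> borel_measurable M"
    and "integrable M (\<lambda>\<omega>. (u \<omega>)^2)"
    and "AE \<omega> in M. \<bar>f \<omega>\<bar> \<le> c + d * u \<omega>"
  shows "integrable M (\<lambda>\<omega>. (f \<omega>)^2)"
proof (rule integrable_if_norm_le_affine[OF assms(1) _ assms(3)])
  show "(\<lambda>\<omega>. (f \<omega>)^2) \<in> borel_measurable M"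
    using assms(2) by simp
  show "AE \<omega> in M. norm ((f \<omega>)^2) \<le> 2 * c^2 + 2 * d^2 * (u \<omega>)^2"
    using assms(4)
  proof eventually_elim
    case (elim \<omega>)
    have "(f \<omega>)^2 \<le> (c + d * u \<omega>)^2"
      using elim by (metis abs_ge_zero power2_abs power_mono)
    also have "\<dots> \<le> 2 * c^2 + 2 * d^2 * (u \<omega>)^2"
      using sum_squares_ge_zero[of "c - d * u \<omega>" 0] by (simp add: power2_eq_square algebra_simps)
    finally show ?case
      by simp
  qed
qed

theorem proposition2:
  fixes M :: "'w measure"
    and D :: "(real^'d) set"
    and G :: "real^'d \<Rightarrow> 'w \<Rightarrow> ((real, 'n::{finite,linorder}) vec, 'n) vec"
    and h :: "real \<Rightarrow> real \<Rightarrow> real"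
    and a :: "'n \<Rightarrow> real"
  assumes "prob_space M"
    and "bounded D" and "open D"
    and h_nonneg: "\<And>\<alpha> g. \<alpha> > 0 \<Longrightarrow> h g \<alpha> \<ge> 0"
    and h_mono: "\<And>\<alpha>. \<alpha> > 0 \<Longrightarrow> strict_mono (\<lambda>g. h g \<alpha>)"
    and h_bound: "\<And>\<alpha>. \<alpha> > 0 \<Longrightarrow>
        \<exists>c_h c_a. 0 < c_h \<and> 0 < c_a \<and> (\<forall>g. h g \<alpha> \<le> c_a + c_h * g^2)"
    and a_pos: "\<And>j. a j > 0"
    and G_meas: "\<And>x. x \<in> D \<Longrightarrow> G x \<in> borel_measurable M"
    and G_sym: "\<And>x \<omega>. x \<in> D \<Longrightarrow> \<omega> \<in> space M \<Longrightarrow> transpose (G x \<omega>) = G x \<omega>"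
    and G_L2: "\<And>x. x \<in> D \<Longrightarrow> integrable M (\<lambda>\<omega>. (frob (G x \<omega>))^2)"
  defines "K0 \<equiv> (\<lambda>x \<omega>. bbL h a (G x \<omega>))"
  shows "\<exists>\<gamma>0 \<gamma>1. 0 < \<gamma>0 \<and> 0 < \<gamma>1 \<and>
     (\<forall>x\<in>D. (AE \<omega> in M. frob (K0 x \<omega>) \<le> \<gamma>0 + \<gamma>1 * (frob (G x \<omega>))^2)
            \<and> integrable M (\<lambda>\<omega>. frob (K0 x \<omega>))
            \<and> (integrable M (\<lambda>\<omega>. (frob (G x \<omega>))^4)
                 \<longrightarrow> integrable M (\<lambda>\<omega>. (frob (K0 x \<omega>))^2))) \<and>
     (\<forall>\<beta>G :: 'w \<Rightarrow> real.
        \<beta>G \<in> borel_measurable M \<and> (\<forall>\<omega>\<in>space M. 0 < \<beta>G \<omega>) \<and>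
        (\<forall>x\<in>D. AE \<omega> in M. frob (G x \<omega>) \<le> \<beta>G \<omega>)
        \<longrightarrow> (\<forall>x\<in>D. AE \<omega> in M. frob (K0 x \<omega>) \<le> \<gamma>0 + \<gamma>1 * (\<beta>G \<omega>)^2))"
proof -
  interpret prob_space M by fact
  have "\<exists>b c. 0 < b \<and> 0 < c \<and> (\<forall>g. h g (a j) \<le> c + b * g^2)" for j
    using h_bound[OF a_pos[of j]] by blast
  then obtain c \<gamma>1 where c_pos: "\<And>j. 0 < c j" and "1 \<le> \<gamma>1"
    and h_le: "\<And>j g. h g (a j) \<le> c j + \<gamma>1 * g^2"
    by (rule finite_quadratic_bounds_uniform[where f = "\<lambda>j g. h g (a j)"]) blast+
  define \<gamma>0 where "\<gamma>0 = (\<Sum>j\<in>UNIV. c j)"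
  have "0 < \<gamma>0"
    unfolding \<gamma>0_def using c_pos by (simp add: sum_pos)
  have K0_le: "frob (K0 x \<omega>) \<le> \<gamma>0 + \<gamma>1 * (frob (G x \<omega>))^2" for x \<omega>
    unfolding K0_def \<gamma>0_def
    by (rule frob_bbL_le[of h a c \<gamma>1, OF h_nonneg[OF a_pos] h_le \<open>1 \<le> \<gamma>1\<close>])
  have K0_meas: "(\<lambda>\<omega>. frob (K0 x \<omega>)) \<in> borel_measurable M" if "x \<in> D" for x
    unfolding K0_def using G_meas[OF that] h_mono[OF a_pos]
    by (intro borel_measurable_frob_bbL borel_measurable_mono strict_mono_mono)
  show ?thesis
  proof (intro exI conjI ballI allI impI)
    fix x assume "x \<in> D"
    show K0_AE: "AE \<omega> in M. frob (K0 x \<omega>) \<le> \<gamma>0 + \<gamma>1 * (frob (G x \<omega>))^2"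
      using K0_le by simp
    then show "integrable M (\<lambda>\<omega>. frob (K0 x \<omega>))"
      using integrable_if_norm_le_affine[OF finite_measure_axioms K0_meas G_L2] \<open>x \<in> D\<close>
      by (simp add: frob_nonneg)
    assume "integrable M (\<lambda>\<omega>. (frob (G x \<omega>))^4)"
    then show "integrable M (\<lambda>\<omega>. (frob (K0 x \<omega>))^2)"
      using integrable_power2_if_abs_le_affine[OF finite_measure_axioms K0_meas,
          where u = "\<lambda>\<omega>. (frob (G x \<omega>))^2" and c = \<gamma>0 and d = \<gamma>1]
        K0_AE \<open>x \<in> D\<close> by (simp add: frob_nonneg flip: power_mult)
  next
    fix \<beta>G :: "'w \<Rightarrow> real" and x
    assume "\<beta>G \<in> borel_measurable M \<and> (\<forall>\<omega>\<in>space M. 0 < \<beta>G \<omega>) \<and>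
        (\<forall>x\<in>D. AE \<omega> in M. frob (G x \<omega>) \<le> \<beta>G \<omega>)" and "x \<in> D"
    then have "AE \<omega> in M. frob (G x \<omega>) \<le> \<beta>G \<omega>"
      by blast
    then show "AE \<omega> in M. frob (K0 x \<omega>) \<le> \<gamma>0 + \<gamma>1 * (\<beta>G \<omega>)^2"
    proof eventually_elim
      case (elim \<omega>)
      then have "(frob (G x \<omega>))^2 \<le> (\<beta>G \<omega>)^2"
        by (simp add: frob_nonneg power_mono)
      then have "\<gamma>1 * (frob (G x \<omega>))^2 \<le> \<gamma>1 * (\<beta>G \<omega>)^2"
        using \<open>1 \<le> \<gamma>1\<close> by (simp add: mult_left_mono)
      then show ?case
        using K0_le[of x \<omega>] by linarith
    qed
  qed (use \<open>0 < \<gamma>0\<close> \<open>1 \<le> \<gamma>1\<close> in auto)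
qed

end
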